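(* Let $\mathcal{X},\mathcal{Y}$ be finite sets, $P_X$ a probability distribution on $\mathcal{X}$, $d:\mathcal{X}\times\mathcal{Y}\to[0,\infty)$, $Q_Y$ a probability distribution on $\mathcal{Y}$, and $w\in(0,1]$. For $x\in\mathcal{X}$ define $$W^w_{Y|X=x}(y)=w^{-1}\,Q_Y(y)\,\Pr_U\big[p_{c,x,y,U}\le w\big],\qquad y\in\mathcal{Y},$$ where $U$ is uniform on $[0,1]$. Then for every $x$, $W^w_{Y|X=x}$ is a probability distribution on $\mathcal{Y}$, and $$\tilde D(w,Q_Y)=\mathbb{E}_{P_X\times W^w_{Y|X}}[d(X,Y)].$$
   Context: $p_{c,x,y,u}=Q_Y\{y': d(x,y')<d(x,y)\}+u\cdot Q_Y\{y': d(x,y')=d(x,y)\}$. $\tilde D(w,Q_Y)=w^{-1}\,\mathbb{E}[d(X,Y)\mathbf{1}\{p_{c,X,Y,U}\le w\}]$ with $X\sim P_X$, $Y\sim Q_Y$, $U$ uniform on $[0,1]$ independent. $P_X\times W_{Y|X}$ denotes the joint law with $X\sim P_X$ and $Y$ given $X=x$ distributed as $W_{Y|X=x}$. *)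

theory Defs
  imports "HOL-Probability.Probability"
begin

definition unif01 :: "real measure" where
  "unif01 = uniform_measure lborel {0..1}"

definition pc :: "'y pmf \<Rightarrow> ('x \<Rightarrow> 'y \<Rightarrow> real) \<Rightarrow> 'x \<Rightarrow> 'y \<Rightarrow> real \<Rightarrow> real" where
  "pc Q d x y u = measure_pmf.prob Q {y'. d x y' < d x y}
                  + u * measure_pmf.prob Q {y'. d x y' = d x y}"

definition Wc :: "real \<Rightarrow> 'y pmf \<Rightarrow> ('x \<Rightarrow> 'y \<Rightarrow> real) \<Rightarrow> 'x \<Rightarrow> 'y \<Rightarrow> real" where
  "Wc w Q d x y = inverse w * pmf Q y * measure unif01 {u\<in>space unif01. pc Q d x y u \<le> w}"

definition Dtilde :: "'x pmf \<Rightarrow> ('x \<Rightarrow> 'y \<Rightarrow> real) \<Rightarrow> real \<Rightarrow> 'y pmf \<Rightarrow> real" where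
  "Dtilde P d w Q = inverse w *
     (\<integral>((x,y),u). d x y * indicator {t. pc Q d x y t \<le> w} u
        \<partial>((measure_pmf P \<Otimes>\<^sub>M measure_pmf Q) \<Otimes>\<^sub>M unif01))"

end

theory Submission
  imports Defs
begin

text \<open>For fixed \<open>x\<close>, group the \<open>y\<close> by the value \<open>s = d x y\<close>. On the level set of \<open>s\<close>,
  \<open>p\<^sub>c = Q{d < s} + u Q{d = s}\<close> sweeps the interval \<open>[Q{d < s}, Q{d \<le> s}]\<close> uniformly as \<open>u\<close>
  ranges over \<open>[0,1]\<close>, so the \<open>Q\<close>-mass of the level times \<open>Pr\<^sub>U[p\<^sub>c \<le> w]\<close> is
  \<open>min w Q{d \<le> s} - min w Q{d < s}\<close>. Summed over all levels this telescopes to \<open>min w 1 = w\<close>,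
  which normalises \<open>W\<close>. The formula for \<open>\<tilde>D\<close> follows by integrating out \<open>U\<close> first, which is
  Fubini over the finite space \<open>X \<times> Y\<close>.\<close>

lemma space_unif01 [simp]: "space unif01 = UNIV"
  by (simp add: unif01_def)

lemma sets_unif01 [simp]: "sets unif01 = sets borel"
  by (simp add: unif01_def)

lemma prob_space_unif01: "prob_space unif01"
  unfolding unif01_def by (rule prob_space_uniform_measure) auto

lemma measure_unif01_atMost: "measure unif01 {..c} = max 0 (min 1 c)"
proof -
  have "measure unif01 {..c} = measure lborel ({0..1} \<inter> {..c})"
    unfolding unif01_def by (subst measure_uniform_measure) auto
  also have "\<dots> = max 0 (min 1 c)"
  proof (cases "c < 0")
    case True
    then have "{0..1} \<inter> {..c} = {}" by auto
    then show ?thesis using True by simp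
  next
    case False
    then have "{0..1} \<inter> {..c} = {0..min 1 c}" by auto
    then show ?thesis using False by simp
  qed
  finally show ?thesis .
qed

lemma measure_unif01_affine_le:
  fixes a b w :: real
  assumes "b > 0"
  shows "b * measure unif01 {u. a + u * b \<le> w} = min w (a + b) - min w a"
proof -
  have "{u. a + u * b \<le> w} = {..(w - a) / b}"
    using assms by (auto simp: field_simps)
  then have "b * measure unif01 {u. a + u * b \<le> w} = b * max 0 (min 1 ((w - a) / b))"
    by (simp add: measure_unif01_atMost)
  also have "\<dots> = min w (a + b) - min w a"
    using assms by (auto simp: min_def max_def field_simps)
  finally show ?thesis .
qed

lemma sets_unif01_pc_le: "{u. pc Q d x y u \<le> w} \<in> sets unif01"
  unfolding pc_def sets_unif01 by (intro borel_closed closed_Collect_le continuous_intros)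

lemma measure_pmf_pair_measure:
  fixes p :: "'a::countable pmf" and q :: "'b::countable pmf"
  shows "measure_pmf p \<Otimes>\<^sub>M measure_pmf q = measure_pmf (pair_pmf p q)"
proof (rule measure_eqI)
  have "sets (measure_pmf p \<Otimes>\<^sub>M measure_pmf q) = sets (count_space UNIV \<Otimes>\<^sub>M count_space UNIV)"
    by (rule sets_pair_measure_cong) simp_all
  also have "count_space UNIV \<Otimes>\<^sub>M count_space UNIV = count_space (UNIV :: ('a \<times> 'b) set)"
    by (simp add: pair_measure_countable)
  finally show "sets (measure_pmf p \<Otimes>\<^sub>M measure_pmf q) = sets (measure_pmf (pair_pmf p q))"
    by simp
  fix A assume "A \<in> sets (measure_pmf p \<Otimes>\<^sub>M measure_pmf q)"
  then have "emeasure (measure_pmf p \<Otimes>\<^sub>M measure_pmf q) A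
      = (\<integral>\<^sup>+a. \<integral>\<^sup>+b. indicator A (a, b) \<partial>q \<partial>p)"
    by (rule measure_pmf.emeasure_pair_measure)
  also have "\<dots> = emeasure (measure_pmf (pair_pmf p q)) A"
    by (simp add: nn_integral_pair_pmf'[symmetric])
  finally show "emeasure (measure_pmf p \<Otimes>\<^sub>M measure_pmf q) A = emeasure (measure_pmf (pair_pmf p q)) A" .
qed

lemma integral_measure_pmf_pair_measure:
  fixes p :: "'a::finite pmf" and f :: "'a \<times> 'b \<Rightarrow> real"
  assumes "sigma_finite_measure M" and slice: "\<And>z. integrable M (\<lambda>u. f (z, u))"
  shows "(\<integral>v. f v \<partial>(measure_pmf p \<Otimes>\<^sub>M M)) = (\<Sum>z\<in>UNIV. pmf p z * (\<integral>u. f (z, u) \<partial>M))"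
proof -
  interpret pair_sigma_finite "measure_pmf p" M
    by (intro pair_sigma_finite.intro measure_pmf.sigma_finite_measure_axioms assms(1))
  have "(\<lambda>v. f (fst v, snd v)) \<in> borel_measurable (measure_pmf p \<Otimes>\<^sub>M M)"
    by (rule measurable_compose_countable[where f="\<lambda>z v. f (z, snd v)"])
       (use slice in \<open>auto intro: measurable_compose[OF measurable_snd]\<close>)
  then have "integrable (measure_pmf p \<Otimes>\<^sub>M M) f"
    by (intro Fubini_integrable) (auto intro: integrable_measure_pmf_finite simp: slice)
  then have "(\<integral>v. f v \<partial>(measure_pmf p \<Otimes>\<^sub>M M)) = (\<integral>z. (\<integral>u. f (z, u) \<partial>M) \<partial>p)"
    by (rule integral_fst'[symmetric])
  also have "\<dots> = (\<Sum>z\<in>UNIV. pmf p z * (\<integral>u. f (z, u) \<partial>M))"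
    by (subst integral_measure_pmf_real[where A=UNIV]) (auto simp: mult.commute)
  finally show ?thesis .
qed

lemma sum_level_sets_telescope:
  fixes g :: "'a \<Rightarrow> 'c::linorder" and H :: "'a set \<Rightarrow> 'b::ab_group_add"
  assumes "finite V" and "range g \<subseteq> V"
  shows "(\<Sum>s\<in>V. H {y. g y \<le> s} - H {y. g y < s}) = H UNIV - H {}"
proof -
  let ?h = "\<lambda>s. H {y. g y \<le> s} - H {y. g y < s}"
  have below: "(\<Sum>s\<in>{s\<in>V. s < c}. ?h s) = H {y. g y < c} - H {}" for c
  proof (induction "card {s\<in>V. s < c}" arbitrary: c rule: less_induct)
    case less
    show ?case
    proof (cases "{s\<in>V. s < c} = {}")
      case True
      moreover have "{y. g y < c} = {}" using True assms(2) by auto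
      ultimately show ?thesis by (metis diff_self sum.empty)
    next
      case False
      define m where "m = Max {s\<in>V. s < c}"
      have m: "m \<in> V" "m < c" "\<And>s. s \<in> V \<Longrightarrow> s < c \<Longrightarrow> s \<le> m"
        using Max_in[OF _ False] Max_ge[of "{s\<in>V. s < c}"] assms(1) unfolding m_def by auto
      then have split: "{s\<in>V. s < c} = insert m {s\<in>V. s < m}" by force
      then have "card {s\<in>V. s < m} < card {s\<in>V. s < c}" using assms(1) by simp
      then have IH: "(\<Sum>s\<in>{s\<in>V. s < m}. ?h s) = H {y. g y < m} - H {}"
        by (rule less)
      have "{y. g y < c} = {y. g y \<le> m}" using assms(2) m by force
      then show ?thesis using assms(1) IH by (simp add: split)
    qed
  qed
  define m where "m = Max V"
  have m: "m \<in> V" "\<And>s. s \<in> V \<Longrightarrow> s \<le> m"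
    using Max_in Max_ge assms unfolding m_def by auto
  then have "V - {m} = {s\<in>V. s < m}" by force
  then have "(\<Sum>s\<in>V. ?h s) = ?h m + (H {y. g y < m} - H {})"
    using sum.remove[OF assms(1) m(1), of ?h] below by simp
  also have "{y. g y \<le> m} = UNIV" using assms(2) m by auto
  finally show ?thesis by simp
qed

lemma sum_level_pmf_measure_pc_le:
  fixes Q :: "'y::finite pmf" and d :: "'x \<Rightarrow> 'y \<Rightarrow> real"
  shows "(\<Sum>y\<in>{y. d x y = s}. pmf Q y * measure unif01 {u. pc Q d x y u \<le> w})
       = min w (measure_pmf.prob Q {y. d x y \<le> s}) - min w (measure_pmf.prob Q {y. d x y < s})"
proof -
  define below where "below = measure_pmf.prob Q {y. d x y < s}"
  define level where "level = measure_pmf.prob Q {y. d x y = s}"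
  have "{y. d x y \<le> s} = {y. d x y < s} \<union> {y. d x y = s}" by auto
  then have le: "measure_pmf.prob Q {y. d x y \<le> s} = below + level"
    unfolding below_def level_def by (simp only:) (rule measure_pmf.finite_measure_Union, auto)
  have level_sum: "(\<Sum>y\<in>{y. d x y = s}. pmf Q y) = level"
    unfolding level_def by (simp add: measure_measure_pmf_finite)
  show ?thesis
  proof (cases "level = 0")
    case True
    then have "pmf Q y = 0" if "d x y = s" for y
      using level_sum that by (simp add: sum_nonneg_eq_0_iff)
    then show ?thesis using True le by (simp add: below_def)
  next
    case False
    then have "level > 0" unfolding level_def by (simp add: zero_less_measure_iff)
    have "pc Q d x y u = below + u * level" if "d x y = s" for y u
      using that unfolding pc_def below_def level_def by simp
    then have "(\<Sum>y\<in>{y. d x y = s}. pmf Q y * measure unif01 {u. pc Q d x y u \<le> w})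
        = level * measure unif01 {u. below + u * level \<le> w}"
      by (simp add: level_sum flip: sum_distrib_right)
    also have "\<dots> = min w (below + level) - min w below"
      using \<open>level > 0\<close> by (rule measure_unif01_affine_le)
    finally show ?thesis using le by (simp add: below_def)
  qed
qed

lemma sum_Wc_eq_1:
  fixes Q :: "'y::finite pmf" and d :: "'x \<Rightarrow> 'y \<Rightarrow> real"
  assumes "0 < w" and "w \<le> 1"
  shows "(\<Sum>y\<in>UNIV. Wc w Q d x y) = 1"
proof -
  have "(\<Sum>y\<in>UNIV. Wc w Q d x y)
      = inverse w * (\<Sum>y\<in>UNIV. pmf Q y * measure unif01 {u. pc Q d x y u \<le> w})"
    by (simp add: Wc_def sum_distrib_left mult.assoc)
  also have "(\<Sum>y\<in>UNIV. pmf Q y * measure unif01 {u. pc Q d x y u \<le> w})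
      = (\<Sum>s\<in>range (d x). \<Sum>y\<in>{y. d x y = s}. pmf Q y * measure unif01 {u. pc Q d x y u \<le> w})"
    by (simp add: sum.image_gen[of UNIV _ "d x"])
  also have "\<dots> = (\<Sum>s\<in>range (d x).
      min w (measure_pmf.prob Q {y. d x y \<le> s}) - min w (measure_pmf.prob Q {y. d x y < s}))"
    by (simp only: sum_level_pmf_measure_pc_le)
  also have "\<dots> = min w (measure_pmf.prob Q UNIV) - min w (measure_pmf.prob Q {})"
    by (rule sum_level_sets_telescope[where H="\<lambda>A. min w (measure_pmf.prob Q A)"]) auto
  also have "\<dots> = w" using assms by simp
  finally show ?thesis using assms by simp
qed

lemma Dtilde_eq_sum_Wc:
  fixes P :: "'x::finite pmf" and Q :: "'y::finite pmf" and d :: "'x \<Rightarrow> 'y \<Rightarrow> real"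
  shows "Dtilde P d w Q = (\<Sum>x\<in>UNIV. \<Sum>y\<in>UNIV. pmf P x * Wc w Q d x y * d x y)"
proof -
  interpret unif01: prob_space unif01 by (rule prob_space_unif01)
  let ?f = "\<lambda>((x, y), u). d x y * indicator {t. pc Q d x y t \<le> w} u"
  have "Dtilde P d w Q = inverse w * (\<integral>v. ?f v \<partial>(measure_pmf (pair_pmf P Q) \<Otimes>\<^sub>M unif01))"
    by (simp add: Dtilde_def measure_pmf_pair_measure)
  also have "(\<integral>v. ?f v \<partial>(measure_pmf (pair_pmf P Q) \<Otimes>\<^sub>M unif01))
      = (\<Sum>z\<in>UNIV. pmf (pair_pmf P Q) z * (\<integral>u. ?f (z, u) \<partial>unif01))"
  proof (rule integral_measure_pmf_pair_measure)
    show "sigma_finite_measure unif01" by unfold_locales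
    show "integrable unif01 (\<lambda>u. ?f (z, u))" for z
      using sets_unif01_pc_le unif01.emeasure_finite
      by (cases z) (auto simp: less_top[symmetric] intro!: integrable_real_indicator)
  qed
  also have "\<dots> = (\<Sum>x\<in>UNIV. \<Sum>y\<in>UNIV. pmf P x * pmf Q y * (d x y * measure unif01 {u. pc Q d x y u \<le> w}))"
    unfolding sum.cartesian_product UNIV_Times_UNIV
    using sets_unif01_pc_le by (intro sum.cong refl) (auto simp: pmf_pair split: prod.split)
  also have "inverse w * \<dots> = (\<Sum>x\<in>UNIV. \<Sum>y\<in>UNIV. pmf P x * Wc w Q d x y * d x y)"
    by (simp add: Wc_def sum_distrib_left mult_ac)
  finally show ?thesis .
qed

theorem proposition2:
  fixes P :: "'x::finite pmf" and Q :: "'y::finite pmf"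
    and d :: "'x \<Rightarrow> 'y \<Rightarrow> real" and w :: real
  assumes "\<And>x y. d x y \<ge> 0"
    and "0 < w" and "w \<le> 1"
  shows "(\<forall>x. (\<forall>y. Wc w Q d x y \<ge> 0) \<and> (\<Sum>y\<in>UNIV. Wc w Q d x y) = 1)
       \<and> Dtilde P d w Q = (\<Sum>x\<in>UNIV. \<Sum>y\<in>UNIV. pmf P x * Wc w Q d x y * d x y)"
proof (intro conjI allI)
  show "Wc w Q d x y \<ge> 0" for x y
    using assms(2) by (simp add: Wc_def)
  show "(\<Sum>y\<in>UNIV. Wc w Q d x y) = 1" for x
    using assms(2,3) by (rule sum_Wc_eq_1)
  show "Dtilde P d w Q = (\<Sum>x\<in>UNIV. \<Sum>y\<in>UNIV. pmf P x * Wc w Q d x y * d x y)"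
    by (rule Dtilde_eq_sum_Wc)
qed

end
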